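(* Let $v_1,\dots,v_N,\tilde v$ be independent uniform templates in $\mathbb{Z}_2^n$ and $\varepsilon\ge0$. Let $\overline{W_N}$ denote the event "$v_2\notin B_\varepsilon(v_1),\ v_3\notin B_\varepsilon(v_1)\cup B_\varepsilon(v_2),\ \dots,\ v_N\notin\bigcup_{k=1}^{N-1}B_\varepsilon(v_k)$". Then $$NV_\varepsilon-\mathcal{I}^\varepsilon_{\varepsilon+1}\frac{N(N-1)}{2}\le\mathbb{P}\left(\tilde v\in\bigcup_{k=1}^N B_\varepsilon(v_k)\,\middle|\,\overline{W_N}\right)\le NV_\varepsilon.$$
   Context: $d_{\mathcal H}$ is the Hamming distance on $\mathbb{Z}_2^n$, $B_\varepsilon(t)=\{y:d_{\mathcal H}(t,y)\le\varepsilon\}$, $V_\varepsilon=\frac1{2^n}\sum_{k=0}^\varepsilon\binom nk$, and $\mathcal{I}^\varepsilon_d=|B_\varepsilon(u)\cap B_\varepsilon(v)|/2^n$ for any $u,v$ with $d_{\mathcal H}(u,v)=d$, explicitly $\mathcal{I}^\varepsilon_d=\frac{1}{2^n}\sum_{k=\max(0,d-\varepsilon)}^{\min(\varepsilon,d)}\sum_{i=0}^{\min(\varepsilon-k,\varepsilon-d+k)}\binom dk\binom{n-d}{i}$. *)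

theory Defs
  imports "HOL-Probability.Probability"
begin

text \<open>Z_2^n is modelled as boolean lists of length n.\<close>

definition cube :: "nat \<Rightarrow> bool list set" where
  "cube n = {xs. length xs = n}"

definition hamming :: "bool list \<Rightarrow> bool list \<Rightarrow> nat" where
  "hamming xs ys = card {i. i < length xs \<and> xs ! i \<noteq> ys ! i}"

definition hball :: "nat \<Rightarrow> bool list \<Rightarrow> bool list set" where
  "hball eps t = {y. length y = length t \<and> hamming t y \<le> eps}"

definition Vol :: "nat \<Rightarrow> nat \<Rightarrow> real" where
  "Vol n eps = (\<Sum>k=0..eps. real (n choose k)) / 2 ^ n"

text \<open>I^eps_d = |B_eps(u) \<inter> B_eps(v)| / 2^n for a pair u, v at distance d
  (canonical representative pair: u = 0...0, v = 1..10..0 with d ones).\<close>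
definition Isec :: "nat \<Rightarrow> nat \<Rightarrow> nat \<Rightarrow> real" where
  "Isec n eps d = real (card (hball eps (replicate n False)
        \<inter> hball eps (replicate d True @ replicate (n - d) False))) / 2 ^ n"

definition templ_space :: "nat \<Rightarrow> nat \<Rightarrow> ((nat \<Rightarrow> bool list) \<times> bool list) set" where
  "templ_space n N = (PiE {1..N} (\<lambda>_. cube n)) \<times> cube n"

definition noWN :: "nat \<Rightarrow> nat \<Rightarrow> (nat \<Rightarrow> bool list) \<Rightarrow> bool" where
  "noWN eps N vs = (\<forall>k\<in>{2..N}. \<forall>j\<in>{1..<k}. vs k \<notin> hball eps (vs j))"

end

theory Submission
  imports Defs
begin

text \<open>Conditioned on the centres being pairwise more than eps apart, the probability that the
  extra template falls into one of their balls is the average of the normalised volume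
  |B(v_1) \<union> ... \<union> B(v_N)| / 2^n over the admissible centres. The union bound gives the upper
  estimate and the Bonferroni inequality the lower one, provided every intersection of two balls
  whose centres are more than eps apart has at most 2^n * Isec n eps (eps + 1) points. This holds
  because moving one centre a coordinate closer to the other never shrinks the intersection, and
  because a translation followed by a coordinate permutation is an isometry carrying any pair at
  distance d to the canonical pair that defines Isec n eps d.\<close>

lemma hamming_conv_sum: "hamming a b = (\<Sum>i<length a. of_bool (a ! i \<noteq> b ! i))"
proof -
  have "{i. i < length a \<and> a ! i \<noteq> b ! i} = {..<length a} \<inter> {i. a ! i \<noteq> b ! i}" by auto
  then show ?thesis by (simp add: hamming_def)
qed

lemma hamming_commute: "length a = length b \<Longrightarrow> hamming a b = hamming b a"
  unfolding hamming_def by (metis (mono_tags) eq_commute)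

lemma hamming_eq_0_iff: "length a = length b \<Longrightarrow> hamming a b = 0 \<longleftrightarrow> a = b"
  by (auto simp: hamming_def list_eq_iff_nth_eq)

lemma hamming_list_update:
  assumes "length a = length b" "i < length b"
  shows "hamming a (b[i := c]) + of_bool (a ! i \<noteq> b ! i) = hamming a b + of_bool (a ! i \<noteq> c)"
proof -
  define R where "R = (\<Sum>j\<in>{..<length a} - {i}. of_bool (a ! j \<noteq> b ! j) :: nat)"
  have "hamming a (b[i := c]) = of_bool (a ! i \<noteq> c) + R"
    unfolding hamming_conv_sum R_def using assms
    by (subst sum.remove[of _ i]) (auto intro!: sum.cong)
  moreover have "hamming a b = of_bool (a ! i \<noteq> b ! i) + R"
    unfolding hamming_conv_sum R_def using assms by (subst sum.remove[of _ i]) auto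
  ultimately show ?thesis by simp
qed

lemma finite_cube: "finite (cube n)"
  using finite_lists_length_eq[of "UNIV :: bool set" n] by (simp add: cube_def)

lemma card_cube: "card (cube n) = 2 ^ n"
  using card_lists_length_eq[of "UNIV :: bool set" n] by (simp add: cube_def)

lemma hball_subset_cube: "hball e t \<subseteq> cube (length t)"
  by (auto simp: hball_def cube_def)

lemma finite_hball: "finite (hball e t)"
  using finite_subset[OF hball_subset_cube finite_cube] .

lemma card_hball: "card (hball e x) = (\<Sum>k=0..e. length x choose k)"
proof -
  define n where "n = length x"
  define f where "f = (\<lambda>y::bool list. {i. i < n \<and> x ! i \<noteq> y ! i})"
  define S where "S = {T. T \<subseteq> {0..<n} \<and> card T \<le> e}"
  have hamming_f: "hamming x y = card (f y)" for y
    by (simp add: hamming_def f_def n_def)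
  have "bij_betw f (hball e x) S"
  proof (rule bij_betw_imageI)
    show "inj_on f (hball e x)"
    proof
      fix y z assume "y \<in> hball e x" "z \<in> hball e x" "f y = f z"
      then show "y = z"
        by (intro nth_equalityI) (auto simp: hball_def f_def n_def set_eq_iff)
    qed
    show "f ` hball e x = S"
    proof
      show "f ` hball e x \<subseteq> S"
        by (auto simp: S_def hball_def hamming_f f_def)
      show "S \<subseteq> f ` hball e x"
      proof
        fix T assume T: "T \<in> S"
        define y where "y = map (\<lambda>i. if i \<in> T then \<not> x ! i else x ! i) [0..<n]"
        have "f y = T" using T by (auto simp: f_def y_def S_def)
        moreover have "y \<in> hball e x"
          using T \<open>f y = T\<close> by (auto simp: hball_def hamming_f S_def y_def n_def)
        ultimately show "T \<in> f ` hball e x" by blast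
      qed
    qed
  qed
  then have "card (hball e x) = card S" by (rule bij_betw_same_card)
  also have "S = (\<Union>k\<in>{0..e}. {T. T \<subseteq> {0..<n} \<and> card T = k})" unfolding S_def by auto
  also have "card \<dots> = (\<Sum>k=0..e. card {T. T \<subseteq> {0..<n} \<and> card T = k})"
    by (rule card_UN_disjoint) auto
  also have "\<dots> = (\<Sum>k=0..e. n choose k)" by (simp add: n_subsets)
  finally show ?thesis by (simp add: n_def)
qed

lemma card_hball_eq_Vol: "real (card (hball e x)) = Vol (length x) e * 2 ^ length x"
  by (simp add: card_hball Vol_def)

lemma list_update_flip_mem_hball_Int:
  assumes lengths: "length u = length v" and i: "i < length v" "u ! i \<noteq> v ! i"
    and y: "y \<in> hball e u \<inter> hball e v" "y \<notin> hball e (v[i := u ! i])"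
  shows "y[i := \<not> y ! i] \<in> hball e u \<inter> hball e (v[i := u ! i]) - hball e v"
proof -
  define v' where "v' = v[i := u ! i]"
  define y' where "y' = y[i := \<not> y ! i]"
  have lv': "length v' = length v" "v' ! i = u ! i" using i by (auto simp: v'_def)
  have ly: "length y = length v" "length y' = length v" using y by (auto simp: hball_def y'_def)
  have in_y: "hamming u y \<le> e" "hamming v y \<le> e" "\<not> hamming v' y \<le> e"
    using y ly lengths lv' by (auto simp: hball_def v'_def)
  have "hamming y v' + of_bool (y ! i \<noteq> v ! i) = hamming y v + of_bool (y ! i \<noteq> u ! i)"
    using hamming_list_update[of y v i "u ! i"] ly i by (simp add: v'_def)
  then have v'_y: "hamming v' y + of_bool (y ! i \<noteq> v ! i) = hamming v y + of_bool (y ! i \<noteq> u ! i)"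
    using hamming_commute[of y v] hamming_commute[of y v'] ly lv' by simp
  have y'_t: "hamming t y' + of_bool (t ! i \<noteq> y ! i) = hamming t y + of_bool (t ! i \<noteq> (\<not> y ! i))"
    if "length t = length v" for t
    using hamming_list_update[of t y i "\<not> y ! i"] that ly i by (simp add: y'_def)
  \<comment> \<open>Since y leaves the ball when v moves towards u, y agrees with v at i and is at distance
    exactly e from v.\<close>
  have "hamming u y' \<le> e \<and> hamming v' y' \<le> e \<and> \<not> hamming v y' \<le> e"
    using in_y v'_y y'_t[OF lengths] y'_t[OF lv'(1)] y'_t[OF refl] i(2) lv'(2)
    by (cases "y ! i"; cases "u ! i") simp_all
  then show ?thesis
    using ly lengths lv' by (simp add: hball_def v'_def y'_def)
qed

lemma card_hball_Int_le_list_update: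
  assumes "length u = length v" "i < length v" "u ! i \<noteq> v ! i"
  shows "card (hball e u \<inter> hball e v) \<le> card (hball e u \<inter> hball e (v[i := u ! i]))"
proof -
  define S where "S = hball e u \<inter> hball e v"
  define S' where "S' = hball e u \<inter> hball e (v[i := u ! i])"
  define flip where "flip = (\<lambda>y :: bool list. y[i := \<not> y ! i])"
  have "flip (flip y) = y" for y
    by (cases "i < length y") (simp_all add: flip_def list_update_beyond)
  then have "inj_on flip (S - S')"
    by (metis inj_on_inverseI)
  moreover have "flip ` (S - S') \<subseteq> S' - S"
    using list_update_flip_mem_hball_Int[OF assms] by (auto simp: S_def S'_def flip_def)
  ultimately have "card (S - S') \<le> card (S' - S)"
    using finite_hball by (intro card_inj_on_le) (auto simp: S'_def)
  moreover have "card S = card (S \<inter> S') + card (S - S')" "card S' = card (S \<inter> S') + card (S' - S)"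
    using finite_hball card_Int_Diff[of S S'] card_Int_Diff[of S' S]
    by (simp_all add: S_def S'_def Int_commute)
  ultimately show ?thesis by (simp add: S_def S'_def)
qed

lemma obtain_hball_Int_at_distance_Suc:
  assumes "length u = length v" "e < hamming u v"
  obtains w where "length w = length v" "hamming u w = Suc e"
    "card (hball e u \<inter> hball e v) \<le> card (hball e u \<inter> hball e w)"
proof -
  have "\<exists>w. length w = length v \<and> hamming u w = Suc e
      \<and> card (hball e u \<inter> hball e v) \<le> card (hball e u \<inter> hball e w)"
    if "length u = length v" "hamming u v = Suc e + k" for k v
    using that
  proof (induction k arbitrary: v)
    case 0
    then show ?case by auto
  next
    case (Suc k)
    then have "u \<noteq> v"
      by (metis hamming_eq_0_iff add_Suc_right nat.distinct(1))
    then obtain i where i: "i < length v" "u ! i \<noteq> v ! i"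
      using Suc.prems(1) by (auto simp: list_eq_iff_nth_eq)
    define v' where "v' = v[i := u ! i]"
    have "hamming u v' = Suc e + k"
      using hamming_list_update[of u v i "u ! i"] i Suc.prems by (simp add: v'_def)
    then obtain w where w: "length w = length v'" "hamming u w = Suc e"
        "card (hball e u \<inter> hball e v') \<le> card (hball e u \<inter> hball e w)"
      using Suc.IH[of v'] Suc.prems(1) by (auto simp: v'_def)
    moreover have "card (hball e u \<inter> hball e v) \<le> card (hball e u \<inter> hball e v')"
      using card_hball_Int_le_list_update[OF Suc.prems(1) i] by (simp add: v'_def)
    ultimately show ?case
      by (auto simp: v'_def)
  qed
  moreover obtain k where "hamming u v = Suc e + k"
    using assms(2) less_iff_Suc_add by auto
  ultimately show ?thesis
    using assms(1) that by blast
qed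

lemma hamming_map2_neq:
  assumes "length a = length c" "length b = length c"
  shows "hamming (map2 (\<noteq>) a c) (map2 (\<noteq>) b c) = hamming a b"
  using assms unfolding hamming_def by (intro arg_cong[where f = card]) auto

lemma hamming_map_nth:
  assumes "distinct ps" "set ps = {..<length a}"
  shows "hamming (map ((!) a) ps) (map ((!) b) ps) = hamming a b"
proof -
  have bij: "bij_betw ((!) ps) {..<length ps} {..<length a}"
    using assms by (intro bij_betw_nth) auto
  have "hamming (map ((!) a) ps) (map ((!) b) ps) = (\<Sum>j<length ps. of_bool (a ! (ps ! j) \<noteq> b ! (ps ! j)))"
    unfolding hamming_conv_sum by (intro sum.cong) auto
  also have "\<dots> = (\<Sum>i<length a. of_bool (a ! i \<noteq> b ! i))"
    by (rule sum.reindex_bij_betw[OF bij])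
  finally show ?thesis
    unfolding hamming_conv_sum .
qed

lemma card_hball_Int_le_isometry:
  assumes iso: "\<And>a b. length a = n \<Longrightarrow> length b = n \<Longrightarrow>
      length (f a) = n \<and> hamming (f a) (f b) = hamming a b"
    and "length u = n" "length w = n"
  shows "card (hball e u \<inter> hball e w) \<le> card (hball e (f u) \<inter> hball e (f w))"
proof (rule card_inj_on_le)
  show "inj_on f (hball e u \<inter> hball e w)"
  proof (rule inj_onI)
    fix a b assume "a \<in> hball e u \<inter> hball e w" "b \<in> hball e u \<inter> hball e w" "f a = f b"
    then show "a = b"
      using iso[of a b] hamming_eq_0_iff[of a b] hamming_eq_0_iff[of "f a" "f b"] assms(2)
      by (simp add: hball_def)
  qed
  show "f ` (hball e u \<inter> hball e w) \<subseteq> hball e (f u) \<inter> hball e (f w)"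
    using iso assms(2,3) by (auto simp: hball_def)
qed (simp add: finite_hball)

lemma card_hball_Int_le_canonical:
  assumes lengths: "length u = n" "length w = n" and dist: "hamming u w = d"
  shows "card (hball e u \<inter> hball e w)
    \<le> card (hball e (replicate n False) \<inter> hball e (replicate d True @ replicate (n - d) False))"
proof -
  define D where "D = {i. i < n \<and> u ! i \<noteq> w ! i}"
  define ps where "ps = sorted_list_of_set D @ sorted_list_of_set ({..<n} - D)"
  \<comment> \<open>Translate by u, then list the coordinates where u and w differ first.\<close>
  define f where "f = (\<lambda>y. map ((!) (map2 (\<noteq>) y u)) ps)"
  have "D \<subseteq> {..<n}" by (auto simp: D_def)
  then have "distinct ps" "set ps = {..<n}"
    by (auto simp: ps_def finite_subset)
  have iso: "length (f a) = n \<and> hamming (f a) (f b) = hamming a b"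
    if "length a = n" "length b = n" for a b
  proof
    show "length (f a) = n"
      using distinct_card[OF \<open>distinct ps\<close>] \<open>set ps = {..<n}\<close> by (simp add: f_def)
    have "hamming (f a) (f b) = hamming (map2 (\<noteq>) a u) (map2 (\<noteq>) b u)"
      unfolding f_def using \<open>distinct ps\<close> \<open>set ps = {..<n}\<close> that lengths
      by (intro hamming_map_nth) simp_all
    also have "\<dots> = hamming a b"
      using that lengths by (intro hamming_map2_neq) simp_all
    finally show "hamming (f a) (f b) = hamming a b" .
  qed
  have f_eq: "f y = map (\<lambda>i. y ! i \<noteq> u ! i) ps" if "length y = n" for y
    using \<open>set ps = {..<n}\<close> that lengths by (auto simp: f_def)
  have "card D = d" "finite D"
    using dist lengths by (simp_all add: D_def hamming_def)
  then have "card ({..<n} - D) = n - d"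
    using \<open>D \<subseteq> {..<n}\<close> by (simp add: card_Diff_subset)
  moreover have "map (\<lambda>i. w ! i \<noteq> u ! i) (sorted_list_of_set D) = replicate d True"
    using \<open>card D = d\<close> \<open>finite D\<close> by (intro replicate_eqI) (auto simp: D_def)
  moreover have "map (\<lambda>i. w ! i \<noteq> u ! i) (sorted_list_of_set ({..<n} - D)) = replicate (n - d) False"
    using \<open>card ({..<n} - D) = n - d\<close> by (intro replicate_eqI) (auto simp: D_def)
  ultimately have "f w = replicate d True @ replicate (n - d) False"
    using f_eq[OF lengths(2)] by (simp add: ps_def)
  moreover have "f u = replicate n False"
    using f_eq[OF lengths(1)] iso[OF lengths(1,1)] by (simp add: map_replicate_const)
  ultimately show ?thesis
    using card_hball_Int_le_isometry[of n f u w e] iso lengths by presburger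
qed

lemma card_hball_Int_le_Isec:
  assumes "length u = n" "length v = n" "e < hamming u v"
  shows "real (card (hball e u \<inter> hball e v)) \<le> Isec n e (e + 1) * 2 ^ n"
proof -
  obtain w where "length w = n" "hamming u w = e + 1"
      "card (hball e u \<inter> hball e v) \<le> card (hball e u \<inter> hball e w)"
    using obtain_hball_Int_at_distance_Suc[of u v e] assms by auto
  with card_hball_Int_le_canonical[OF assms(1) this(1,2), of e] show ?thesis
    by (simp add: Isec_def)
qed

lemma card_UN_ge_pairwise:
  fixes B :: "nat \<Rightarrow> 'a set"
  assumes "\<And>k. finite (B k)"
  shows "(\<Sum>k=1..N. card (B k))
    \<le> card (\<Union>k\<in>{1..N}. B k) + (\<Sum>k=1..N. \<Sum>j=1..<k. card (B j \<inter> B k))"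
proof (induction N)
  case 0
  then show ?case by simp
next
  case (Suc N)
  define U where "U = (\<Union>k\<in>{1..N}. B k)"
  have "card (U \<union> B (Suc N)) + card (U \<inter> B (Suc N)) = card U + card (B (Suc N))"
    using card_Un_Int[of U "B (Suc N)"] assms by (simp add: U_def)
  moreover have "card (U \<inter> B (Suc N)) \<le> (\<Sum>j=1..<Suc N. card (B j \<inter> B (Suc N)))"
    using card_UN_le[of "{1..N}" "\<lambda>j. B j \<inter> B (Suc N)"]
    by (simp add: U_def Int_UN_distrib2 atLeastLessThanSuc_atLeastAtMost)
  moreover have "(\<Union>k\<in>{1..Suc N}. B k) = U \<union> B (Suc N)"
    by (auto simp: U_def atLeastAtMostSuc_conv)
  ultimately show ?case
    using Suc.IH unfolding U_def[symmetric] by simp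
qed

lemma card_UN_hball_le:
  assumes "\<And>k. k \<in> {1..N} \<Longrightarrow> length (c k) = n"
  shows "real (card (\<Union>k\<in>{1..N}. hball e (c k))) / 2 ^ n \<le> real N * Vol n e"
proof -
  have "real (card (\<Union>k\<in>{1..N}. hball e (c k))) \<le> (\<Sum>k=1..N. real (card (hball e (c k))))"
    by (metis card_UN_le finite_atLeastAtMost of_nat_le_iff of_nat_sum)
  also have "\<dots> = real N * Vol n e * 2 ^ n"
    using assms by (simp add: card_hball_eq_Vol)
  finally show ?thesis
    by (simp add: divide_le_eq)
qed

lemma card_UN_hball_ge:
  assumes lengths: "\<And>k. k \<in> {1..N} \<Longrightarrow> length (c k) = n" and separated: "noWN e N c"
  shows "real N * Vol n e - Isec n e (e + 1) * (real N * (real N - 1) / 2)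
    \<le> real (card (\<Union>k\<in>{1..N}. hball e (c k))) / 2 ^ n"
proof -
  define I where "I = Isec n e (e + 1) * 2 ^ n"
  have "real (card (hball e (c j) \<inter> hball e (c k))) \<le> I" if "k \<in> {1..N}" "j \<in> {1..<k}" for j k
  proof -
    have "c k \<notin> hball e (c j)"
      using separated that unfolding noWN_def by auto
    then show ?thesis
      using lengths that card_hball_Int_le_Isec[of "c j" n "c k" e] by (simp add: I_def hball_def)
  qed
  then have "(\<Sum>k=1..N. \<Sum>j=1..<k. real (card (hball e (c j) \<inter> hball e (c k))))
      \<le> (\<Sum>k=1..N. real (k - 1) * I)"
    by (intro sum_mono order_trans[OF sum_bounded_above]) auto
  also have "\<dots> = I * (real N * (real N - 1) / 2)"
    by (induction N) (simp_all add: sum_distrib_left field_simps of_nat_diff)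
  finally have pairs: "(\<Sum>k=1..N. \<Sum>j=1..<k. real (card (hball e (c j) \<inter> hball e (c k))))
      \<le> I * (real N * (real N - 1) / 2)" .
  have "(\<Sum>k=1..N. real (card (hball e (c k))))
      \<le> real (card (\<Union>k\<in>{1..N}. hball e (c k)))
        + (\<Sum>k=1..N. \<Sum>j=1..<k. real (card (hball e (c j) \<inter> hball e (c k))))"
    using card_UN_ge_pairwise[of "\<lambda>k. hball e (c k)" N, OF finite_hball]
    unfolding of_nat_sum[symmetric] of_nat_add[symmetric] of_nat_le_iff .
  moreover have "(\<Sum>k=1..N. real (card (hball e (c k)))) = real N * Vol n e * 2 ^ n"
    using lengths by (simp add: card_hball_eq_Vol)
  ultimately have "real N * Vol n e * 2 ^ n - I * (real N * (real N - 1) / 2)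
      \<le> real (card (\<Union>k\<in>{1..N}. hball e (c k)))"
    using pairs by linarith
  then show ?thesis
    by (simp add: I_def le_divide_eq algebra_simps)
qed

lemma prob_Sigma_div_prob_Times_pmf_of_set:
  fixes X :: "'a set" and Y :: "'b set"
  assumes "finite X" "finite Y" "X \<noteq> {}" "Y \<noteq> {}"
    and "V \<subseteq> X" "\<And>x. x \<in> V \<Longrightarrow> U x \<subseteq> Y"
  shows "measure_pmf.prob (pmf_of_set (X \<times> Y)) (Sigma V U)
      / measure_pmf.prob (pmf_of_set (X \<times> Y)) (V \<times> Y)
    = (\<Sum>x\<in>V. real (card (U x)) / real (card Y)) / real (card V)"
proof -
  have prob: "measure_pmf.prob (pmf_of_set (X \<times> Y)) E = real (card E) / real (card (X \<times> Y))"
    if "E \<subseteq> X \<times> Y" for E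
    using measure_pmf_of_set[of "X \<times> Y" E] assms(1-4) that by (simp add: Int_absorb1)
  have "finite V" "\<And>x. x \<in> V \<Longrightarrow> finite (U x)"
    using assms finite_subset by blast+
  then have "card (Sigma V U) = (\<Sum>x\<in>V. card (U x))"
    by (simp add: card_SigmaI)
  moreover have "Sigma V U \<subseteq> X \<times> Y" "V \<times> Y \<subseteq> X \<times> Y"
    using assms(5,6) by auto
  moreover have "card (X \<times> Y) > 0"
    using assms(1-4) by (simp add: card_gt_0_iff)
  ultimately show ?thesis
    by (simp add: prob card_cartesian_product sum_divide_distrib[symmetric])
qed

definition separated_centres :: "nat \<Rightarrow> nat \<Rightarrow> nat \<Rightarrow> (nat \<Rightarrow> bool list) set" where
  "separated_centres n eps N = {vs \<in> PiE {1..N} (\<lambda>_. cube n). noWN eps N vs}"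

lemma finite_separated_centres: "finite (separated_centres n eps N)"
  by (simp add: separated_centres_def finite_PiE finite_cube)

lemma length_separated_centres:
  "vs \<in> separated_centres n eps N \<Longrightarrow> k \<in> {1..N} \<Longrightarrow> length (vs k) = n"
  by (auto simp: separated_centres_def cube_def)

lemma templ_space_noWN_eq:
  "{(vs, t) \<in> templ_space n N. noWN eps N vs} = separated_centres n eps N \<times> cube n"
  by (auto simp: separated_centres_def templ_space_def)

lemma cond_prob_hit_eq_mean:
  fixes n N eps :: nat
  defines "P \<equiv> pmf_of_set (templ_space n N)"
  defines "W \<equiv> {(vs, t) \<in> templ_space n N. noWN eps N vs}"
  defines "A \<equiv> {(vs, t) \<in> templ_space n N. t \<in> (\<Union>k\<in>{1..N}. hball eps (vs k))}"
  shows "measure_pmf.prob P (A \<inter> W) / measure_pmf.prob P W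
    = (\<Sum>vs\<in>separated_centres n eps N. real (card (\<Union>k\<in>{1..N}. hball eps (vs k))) / 2 ^ n)
      / real (card (separated_centres n eps N))"
proof -
  define V where "V = separated_centres n eps N"
  define U where "U vs = (\<Union>k\<in>{1..N}. hball eps (vs k))" for vs
  have U_cube: "U vs \<subseteq> cube n" if "vs \<in> V" for vs
    using hball_subset_cube length_separated_centres[OF that[unfolded V_def]]
    unfolding U_def by (metis (no_types, lifting) UN_least)
  have W: "W = V \<times> cube n"
    unfolding W_def V_def by (rule templ_space_noWN_eq)
  have AW: "A \<inter> W = Sigma V U"
    using U_cube unfolding A_def W U_def
    by (auto simp: V_def separated_centres_def templ_space_def)
  have "PiE {1..N} (\<lambda>_. cube n) \<noteq> {}" "cube n \<noteq> {}" "V \<subseteq> PiE {1..N} (\<lambda>_. cube n)"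
    by (auto simp: PiE_eq_empty_iff cube_def V_def separated_centres_def
        intro: exI[of _ "replicate n False"])
  then have "measure_pmf.prob P (A \<inter> W) / measure_pmf.prob P W
      = (\<Sum>vs\<in>V. real (card (U vs)) / real (card (cube n))) / real (card V)"
    unfolding AW unfolding W P_def templ_space_def
    using U_cube by (intro prob_Sigma_div_prob_Times_pmf_of_set) (simp_all add: finite_PiE finite_cube)
  then show ?thesis
    by (simp add: card_cube U_def V_def)
qed

theorem lemma4p10:
  fixes n N eps :: nat
  defines "P \<equiv> pmf_of_set (templ_space n N)"
  defines "W \<equiv> {(vs, t) \<in> templ_space n N. noWN eps N vs}"
  defines "A \<equiv> {(vs, t) \<in> templ_space n N. t \<in> (\<Union>k\<in>{1..N}. hball eps (vs k))}"
  assumes pos: "measure_pmf.prob P W > 0"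
  shows "real N * Vol n eps - Isec n eps (eps + 1) * (real N * (real N - 1) / 2)
           \<le> measure_pmf.prob P (A \<inter> W) / measure_pmf.prob P W
         \<and> measure_pmf.prob P (A \<inter> W) / measure_pmf.prob P W \<le> real N * Vol n eps"
proof -
  define V where "V = separated_centres n eps N"
  define vol where "vol vs = real (card (\<Union>k\<in>{1..N}. hball eps (vs k))) / 2 ^ n" for vs
  define L where "L = real N * Vol n eps - Isec n eps (eps + 1) * (real N * (real N - 1) / 2)"
  have "V \<noteq> {}"
    using pos by (auto simp: W_def V_def templ_space_noWN_eq)
  then have "card V > 0"
    by (simp add: V_def card_gt_0_iff finite_separated_centres)
  moreover have "L \<le> vol vs" "vol vs \<le> real N * Vol n eps" if "vs \<in> V" for vs
    using card_UN_hball_ge[of N vs n eps] card_UN_hball_le[of N vs n eps]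
      length_separated_centres[OF that[unfolded V_def]] that
    by (simp_all add: vol_def L_def V_def separated_centres_def)
  ultimately show ?thesis
    unfolding P_def W_def A_def cond_prob_hit_eq_mean V_def[symmetric] vol_def[symmetric] L_def[symmetric]
    using sum_bounded_below[of V L vol] sum_bounded_above[of V vol "real N * Vol n eps"]
    by (simp add: le_divide_eq divide_le_eq mult.commute)
qed

end
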